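(* Consider the looped Markov chain $\mathcal{G}'$ described in the context, with parameters $r\ge1$, $p,p_c\in[0,1]$, and let $\nu=p\,p_c$ with $\nu\cdot r<1$. Let $\alpha=\alpha_1\cdots\alpha_t\in\{1,\ldots,r\}^*$ ($t\ge0$) and $1\le i\le r$. Then the mean hitting time of $s_i^\alpha$ from $\sharp$ is $$m_\sharp(s_i^\alpha)=\nu^{-t}+(i-1)\Delta+\sum_{k=1}^{t}\frac{1+p+(\alpha_k-1)\Delta+(1-\nu)\sum_{s=1}^{k}(r-\alpha_s)\Delta}{\nu^{t+1-k}}.$$
   Context: Fix an integer $r\ge1$ and probabilities $p,p_c\in[0,1]$. Words $\alpha\in\{1,\ldots,r\}^*$ (finite sequences, $\varepsilon$ empty word, $\alpha\cdot i$ concatenation, $r^k$ the word of $k$ letters $r$) are called blocks. The Markov chain $\mathcal{G}'$ has the countable state space $\{s_i^\alpha, c_i^\alpha : 1\le i\le r,\ \alpha\in\{1,\ldots,r\}^*\}\cup\{\sharp\}$, initial state $\sharp$, and transition probabilities (all unlisted ones are $0$): $p(\sharp,s_1^\varepsilon)=1$; $p(s_i^\alpha,c_i^\alpha)=p$ for $1\le i\le r$; $p(s_i^\alpha,s_{i+1}^\alpha)=1-p$ for $1\le i<r$; $p(c_i^\alpha,s_1^{\alpha\cdot i})=p_c$ for $1\le i\le r$; $p(c_i^\alpha,s_{i+1}^\alpha)=1-p_c$ for $1\le i<r$; for every word $\gamma=\beta\cdot i\cdot r^k$ with $1\le i<r$, $k\ge0$: $p(s_r^\gamma,s_{i+1}^\beta)=1-p$,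 $p(c_r^\gamma,s_{i+1}^\beta)=1-p_c$; for every $\gamma\in r^*$ (including $\varepsilon$): $p(s_r^\gamma,\sharp)=1-p$, $p(c_r^\gamma,\sharp)=1-p_c$. (This is the chain of the guard strategy with $p_1=\cdots=p_r=p$, in which the terminal state is merged into $\sharp$ so that generation is repeated forever, and $\sharp$ always proceeds to $s_1^\varepsilon$.) For states $x,y$, $m_x(y)$ denotes the expected value of $\inf\{n\ge0: X_n=y\}$ for the chain $(X_n)$ started at $X_0=x$. Let $C:=m_{s_1^\varepsilon}(\sharp)$ and $\Delta:=1+p(1+p_c C)$. *)

theory Defs
  imports "HOL-Probability.Probability"
begin

text \<open>States of the chain G': Sharp, S i alpha (= s_i^alpha), C i alpha (= c_i^alpha).
  Blocks are lists of letters in 1..r; alpha . i is  alpha @ [i].\<close>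
datatype state = Sharp | S nat "nat list" | C nat "nat list"

text \<open>Target of the (1-p) / (1-p_c) move out of s_r^gamma / c_r^gamma:
  for gamma = beta . i . r^k with i < r go to s_{i+1}^beta; for gamma in r^* go to Sharp.\<close>
definition up :: "nat \<Rightarrow> nat list \<Rightarrow> state" where
  "up r \<gamma> = (let \<delta> = rev (dropWhile (\<lambda>x. x = r) (rev \<gamma>))
               in if \<delta> = [] then Sharp else S (last \<delta> + 1) (butlast \<delta>))"

text \<open>Transition kernel of G'. States with an index outside 1..r are unreachable;
  they are sent to Sharp arbitrarily.\<close>
fun K :: "nat \<Rightarrow> real \<Rightarrow> real \<Rightarrow> state \<Rightarrow> state pmf" where
  "K r p pc Sharp = return_pmf (S 1 [])"
| "K r p pc (S i \<alpha>) =
     (if 1 \<le> i \<and> i < r then map_pmf (\<lambda>b. if b then C i \<alpha> else S (i+1) \<alpha>) (bernoulli_pmf p)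
      else if i = r \<and> 1 \<le> i then map_pmf (\<lambda>b. if b then C i \<alpha> else up r \<alpha>) (bernoulli_pmf p)
      else return_pmf Sharp)"
| "K r p pc (C i \<alpha>) =
     (if 1 \<le> i \<and> i < r then map_pmf (\<lambda>b. if b then S 1 (\<alpha> @ [i]) else S (i+1) \<alpha>) (bernoulli_pmf pc)
      else if i = r \<and> 1 \<le> i then map_pmf (\<lambda>b. if b then S 1 (\<alpha> @ [i]) else up r \<alpha>) (bernoulli_pmf pc)
      else return_pmf Sharp)"

fun paths :: "nat \<Rightarrow> real \<Rightarrow> real \<Rightarrow> state \<Rightarrow> nat \<Rightarrow> state list pmf" where
  "paths r p pc x 0 = return_pmf [x]"
| "paths r p pc x (Suc n) =
     paths r p pc x n \<bind> (\<lambda>xs. map_pmf (\<lambda>z. xs @ [z]) (K r p pc (last xs)))"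

text \<open>Mean hitting time m_x(y) = E[inf{n \<ge> 0. X_n = y}] (value in [0,\<infinity>]),
  computed by the tail-sum formula E[T] = \<Sum>_{n\<ge>0} P(T > n),
  where T > n iff none of X_0..X_n equals y.\<close>
definition mht :: "nat \<Rightarrow> real \<Rightarrow> real \<Rightarrow> state \<Rightarrow> state \<Rightarrow> ennreal" where
  "mht r p pc x y = (\<Sum>n. ennreal (measure_pmf.prob (paths r p pc x n) {xs. y \<notin> set xs}))"

end

(*
  The chain is self-similar: started at S 1 gamma, it runs until it reaches up r gamma exactly
  like the chain started at S 1 [] runs until it reaches Sharp.  Cutting paths at states they
  must pass through therefore reduces first-step analysis to a finite system: leaving a block
  costs Delta, returning from up r gamma to Sharp costs (sum over s of (r - gamma_s)) * Delta,
  and the times Y k from S 1 (alpha_1 ... alpha_k) to the target satisfy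
    Y k = b k + nu * Y (k + 1) + (1 - nu) * E,   E = 1 + Y 0,   Y t = (i - 1) * Delta,
  where E is the time from Sharp.  Telescoping gives E = A + (1 - nu^t) * E, i.e. E = A / nu^t.
  These equations are also solved by infinity, so finiteness of E (and of the excursion time
  behind Delta) comes from the truncated times E min(T, N), which satisfy the same relations
  as inequalities.
*)
theory Submission
  imports Defs "HOL-Library.Sublist"
begin

section \<open>Series and affine equations in ennreal\<close>

lemma suminf_cauchy_product_ennreal:
  "(\<Sum>n. \<Sum>j\<le>n. f j * g (n - j) :: ennreal) = (\<Sum>j. f j) * (\<Sum>m. g m)"
proof -
  have "(\<Sum>n. \<Sum>j\<le>n. f j * g (n - j)) = (\<Sum>n. \<Sum>j. if j \<le> n then f j * g (n - j) else 0)"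
    by (intro suminf_cong, subst suminf_finite[where N="{..n}" for n]) auto
  also have "\<dots> = (\<Sum>j. \<Sum>n. if j \<le> n then f j * g (n - j) else 0)"
    using nn_integral_suminf[of "\<lambda>j n. if j \<le> n then f j * g (n - j) else 0" "count_space UNIV"]
    by (simp add: nn_integral_count_space_nat)
  also have "\<dots> = (\<Sum>j. f j * (\<Sum>m. g m))"
  proof (intro suminf_cong)
    fix j
    show "(\<Sum>n. if j \<le> n then f j * g (n - j) else 0) = f j * (\<Sum>m. g m)"
      using suminf_offset[of "\<lambda>n. if j \<le> n then f j * g (n - j) else 0" j] by simp
  qed
  finally show ?thesis by simp
qed

lemma sum_cauchy_product_le_ennreal:
  "(\<Sum>n<(N::nat). \<Sum>j\<le>n. f j * g (n - j) :: ennreal) \<le> (\<Sum>j<N. f j) * (\<Sum>m<N. g m)"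
proof -
  have "(\<Sum>n<N. \<Sum>j\<le>n. f j * g (n - j)) = (\<Sum>(j, m) \<in> {(j, m). j + m < N}. f j * g m)"
    by (rule sum.triangle_reindex[symmetric])
  also have "\<dots> \<le> (\<Sum>(j, m) \<in> {..<N} \<times> {..<N}. f j * g m)"
    by (intro sum_mono2) auto
  also have "\<dots> = (\<Sum>j<N. f j) * (\<Sum>m<N. g m)"
    by (simp add: sum.cartesian_product[symmetric] sum_product)
  finally show ?thesis .
qed

lemma suminf_const_ennreal: "0 < c \<Longrightarrow> (\<Sum>n::nat. ennreal c) = \<top>"
  by (rule summable_iff_suminf_neq_top) (auto simp: summable_const_iff)

lemma ennreal_le_affine_fixpoint:
  assumes "x \<le> a + ennreal q * x" "x \<noteq> \<top>" "0 \<le> q" "q < 1"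
  shows "x \<le> a / ennreal (1 - q)"
proof (cases "a = \<top>")
  case False
  obtain x' where x': "x = ennreal x'" "0 \<le> x'"
    using assms(2) by (cases x) auto
  obtain a' where a': "a = ennreal a'" "0 \<le> a'"
    using False by (cases a) auto
  have "ennreal x' \<le> ennreal (a' + q * x')"
    using assms(1,3) x' a' by (simp add: ennreal_mult ennreal_plus)
  then have "x' \<le> a' + q * x'"
    using a' x' assms(3) by (subst (asm) ennreal_le_iff) auto
  then have "x' \<le> a' / (1 - q)"
    using assms(4) by (simp add: pos_le_divide_eq algebra_simps)
  then show ?thesis
    using x' a' assms(4) by (simp add: divide_ennreal ennreal_leI)
next
  case True
  then show ?thesis
    using assms(4) by (simp add: divide_ennreal_def inverse_ennreal ennreal_top_mult)
qed

lemma ennreal_eq_affine_fixpoint: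
  assumes "x = a + ennreal q * x" "x \<noteq> \<top>" "0 \<le> q" "q < 1"
  shows "x = a / ennreal (1 - q)"
proof -
  obtain x' where x': "x = ennreal x'" "0 \<le> x'"
    using assms(2) by (cases x) auto
  have "a \<noteq> \<top>"
    using assms(1,2) by auto
  then obtain a' where a': "a = ennreal a'" "0 \<le> a'"
    by (cases a) auto
  have "ennreal x' = ennreal (a' + q * x')"
    using assms(1,3) x' a' by (simp add: ennreal_mult ennreal_plus)
  then have "x' = a' + q * x'"
    using a' x' assms(3) by (subst (asm) ennreal_inj) auto
  then have "x' = a' / (1 - q)"
    using assms(4) by (simp add: eq_divide_eq algebra_simps)
  then show ?thesis
    using x' a' assms(4) by (simp add: divide_ennreal)
qed

lemma telescope_le:
  fixes y b :: "nat \<Rightarrow> 'a::{ordered_comm_semiring, ordered_semiring_1}"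
  assumes "0 \<le> v" and step: "\<And>k. k < n \<Longrightarrow> y k \<le> b k + v * y (Suc k)"
  shows "y 0 \<le> (\<Sum>k<n. v ^ k * b k) + v ^ n * y n"
proof -
  have "y 0 \<le> (\<Sum>k<l. v ^ k * b k) + v ^ l * y l" if "l \<le> n" for l
    using that
  proof (induction l)
    case (Suc l)
    then have "y 0 \<le> (\<Sum>k<l. v ^ k * b k) + v ^ l * y l"
      by simp
    also have "\<dots> \<le> (\<Sum>k<l. v ^ k * b k) + v ^ l * (b l + v * y (Suc l))"
      using Suc.prems step[of l] \<open>0 \<le> v\<close> by (intro add_left_mono mult_left_mono) auto
    also have "\<dots> = (\<Sum>k<Suc l. v ^ k * b k) + v ^ Suc l * y (Suc l)"
      by (simp add: algebra_simps)
    finally show ?case .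
  qed simp
  then show ?thesis
    by simp
qed

lemma telescope_eq:
  fixes y b :: "nat \<Rightarrow> 'a::comm_semiring_1"
  assumes "\<And>k. k < n \<Longrightarrow> y k = b k + v * y (Suc k)"
  shows "y 0 = (\<Sum>k<n. v ^ k * b k) + v ^ n * y n"
proof -
  have "y 0 = (\<Sum>k<l. v ^ k * b k) + v ^ l * y l" if "l \<le> n" for l
    using that by (induction l) (simp_all add: assms algebra_simps)
  then show ?thesis
    by simp
qed

lemma divide_power_split_ennreal:
  fixes v d :: ennreal and b :: "nat \<Rightarrow> ennreal"
  assumes "v ^ t \<noteq> 0" "v \<noteq> \<top>"
  shows "(1 + (\<Sum>k<t. v ^ k * b k) + v ^ t * d) / v ^ t
    = inverse (v ^ t) + d + (\<Sum>k = 1..t. b (k - 1) / v ^ (t + 1 - k))"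
proof -
  have top: "v ^ n \<noteq> \<top>" for n
    using assms(2) by (simp add: power_eq_top_ennreal)
  have "v ^ k * b k / v ^ t = b k / v ^ (t - k)" if "k < t" for k
  proof -
    have "v \<noteq> 0"
      using assms(1) that by auto
    have "v ^ t = v ^ (t - k) * v ^ k"
      using that by (simp flip: power_add)
    then have "v ^ k * b k / v ^ t = b k * v ^ k / (v ^ (t - k) * v ^ k)"
      by (simp only: mult.commute[of "v ^ k" "b k"])
    also have "\<dots> = b k / v ^ (t - k)"
      by (rule divide_mult_eq) (use \<open>v \<noteq> 0\<close> top in auto)
    finally show ?thesis .
  qed
  then have "(\<Sum>k<t. v ^ k * b k) / v ^ t = (\<Sum>k<t. b k / v ^ (t - k))"
    by (simp add: divide_ennreal_def sum_distrib_right)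
  also have "\<dots> = (\<Sum>k = 1..t. b (k - 1) / v ^ (t + 1 - k))"
    by (simp add: sum.atLeast1_atMost_eq)
  finally have "(\<Sum>k<t. v ^ k * b k) / v ^ t = (\<Sum>k = 1..t. b (k - 1) / v ^ (t + 1 - k))" .
  moreover have "v ^ t * d / v ^ t = d"
    using assms(1) top by (simp add: mult.commute ennreal_mult_divide_eq)
  ultimately show ?thesis
    by (simp add: add_divide_distrib_ennreal divide_ennreal_def distrib_right add_ac)
qed

section \<open>Hitting times of a Markov kernel\<close>

fun avoid_prob :: "('a \<Rightarrow> 'a pmf) \<Rightarrow> 'a \<Rightarrow> nat \<Rightarrow> 'a \<Rightarrow> ennreal" where
  "avoid_prob M y 0 x = (if x = y then 0 else 1)"
| "avoid_prob M y (Suc n) x = (if x = y then 0 else \<integral>\<^sup>+ z. avoid_prob M y n z \<partial>M x)"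

fun first_hit_prob :: "('a \<Rightarrow> 'a pmf) \<Rightarrow> 'a \<Rightarrow> nat \<Rightarrow> 'a \<Rightarrow> ennreal" where
  "first_hit_prob M w 0 x = (if x = w then 1 else 0)"
| "first_hit_prob M w (Suc n) x = (if x = w then 0 else \<integral>\<^sup>+ z. first_hit_prob M w n z \<partial>M x)"

definition hit_prob :: "('a \<Rightarrow> 'a pmf) \<Rightarrow> 'a \<Rightarrow> 'a \<Rightarrow> ennreal" where
  "hit_prob M w x = (\<Sum>n. first_hit_prob M w n x)"

definition hit_time :: "('a \<Rightarrow> 'a pmf) \<Rightarrow> 'a \<Rightarrow> 'a \<Rightarrow> ennreal" where
  "hit_time M x y = (\<Sum>n. avoid_prob M y n x)"

(* E min(T, N), where T is the hitting time of y *)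
definition hit_time_trunc :: "('a \<Rightarrow> 'a pmf) \<Rightarrow> nat \<Rightarrow> 'a \<Rightarrow> 'a \<Rightarrow> ennreal" where
  "hit_time_trunc M N x y = (\<Sum>n<N. avoid_prob M y n x)"

definition closed_until :: "('a \<Rightarrow> 'a pmf) \<Rightarrow> 'a \<Rightarrow> 'a set \<Rightarrow> bool" where
  "closed_until M w R \<longleftrightarrow> (\<forall>z \<in> R - {w}. set_pmf (M z) \<subseteq> R)"

lemma avoid_prob_le_1: "avoid_prob M y n x \<le> 1"
proof (induction n arbitrary: x)
  case (Suc n)
  have "(\<integral>\<^sup>+ z. avoid_prob M y n z \<partial>M x) \<le> (\<integral>\<^sup>+ z. 1 \<partial>M x)"
    by (intro nn_integral_mono Suc)
  then show ?case by (simp add: measure_pmf.emeasure_space_1)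
qed simp

lemma avoid_prob_self [simp]: "avoid_prob M y n y = 0"
  by (cases n) simp_all

lemma avoid_prob_add_first_hit_prob: "avoid_prob M w n x + (\<Sum>j\<le>n. first_hit_prob M w j x) = 1"
proof (induction n arbitrary: x)
  case (Suc n)
  show ?case
  proof (cases "x = w")
    case False
    have "avoid_prob M w (Suc n) x + (\<Sum>j\<le>Suc n. first_hit_prob M w j x)
        = \<integral>\<^sup>+ z. avoid_prob M w n z + (\<Sum>j\<le>n. first_hit_prob M w j z) \<partial>M x"
      using False by (simp add: sum.atMost_Suc_shift nn_integral_add nn_integral_sum del: sum.atMost_Suc)
    then show ?thesis by (simp add: Suc measure_pmf.emeasure_space_1)
  qed (simp add: sum.atMost_Suc_shift del: sum.atMost_Suc)
qed simp

lemma hit_prob_le_1: "hit_prob M w x \<le> 1"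
  unfolding hit_prob_def
proof (rule suminf_le_const)
  fix n
  have "(\<Sum>j<n. first_hit_prob M w j x) \<le> avoid_prob M w n x + (\<Sum>j\<le>n. first_hit_prob M w j x)"
    by (intro add_increasing zero_le sum_mono2) auto
  then show "(\<Sum>j<n. first_hit_prob M w j x) \<le> 1"
    by (simp add: avoid_prob_add_first_hit_prob)
qed auto

lemma hit_prob_eq_1:
  assumes "hit_time M x w \<noteq> \<top>"
  shows "hit_prob M w x = 1"
proof (rule ccontr)
  assume "hit_prob M w x \<noteq> 1"
  with hit_prob_le_1[of M w x] have "hit_prob M w x < 1"
    by simp
  then obtain e where e: "hit_prob M w x = ennreal e" "0 \<le> e" "e < 1"
    by (cases "hit_prob M w x") (auto simp: ennreal_less_one_iff)
  have "ennreal (1 - e) \<le> avoid_prob M w n x" for n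
  proof -
    have "(\<Sum>j\<le>n. first_hit_prob M w j x) \<le> ennreal e"
      unfolding e(1)[symmetric] hit_prob_def by (rule sum_le_suminf) auto
    then have "1 \<le> avoid_prob M w n x + ennreal e"
      using avoid_prob_add_first_hit_prob[of M w n x] by (metis add_left_mono)
    then show ?thesis
      using e by (simp add: ennreal_minus_le_iff add.commute ennreal_minus[symmetric])
  qed
  then have "(\<Sum>n. ennreal (1 - e)) \<le> hit_time M x w"
    unfolding hit_time_def by (intro suminf_le) auto
  with assms e show False
    by (simp add: suminf_const_ennreal top_unique)
qed

lemma hit_time_step:
  "hit_time M x y = (if x = y then 0 else 1 + \<integral>\<^sup>+ z. hit_time M z y \<partial>M x)"
proof -
  have "hit_time M x y = avoid_prob M y 0 x + (\<Sum>n. avoid_prob M y (Suc n) x)"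
    unfolding hit_time_def using suminf_offset[of "\<lambda>n. avoid_prob M y n x" 1] by simp
  then show ?thesis
    by (simp add: hit_time_def nn_integral_suminf)
qed

lemma hit_time_self [simp]: "hit_time M y y = 0"
  by (subst hit_time_step) simp

lemma hit_time_trunc_Suc:
  "hit_time_trunc M (Suc N) x y = (if x = y then 0 else 1 + \<integral>\<^sup>+ z. hit_time_trunc M N z y \<partial>M x)"
proof -
  have "hit_time_trunc M (Suc N) x y = avoid_prob M y 0 x + (\<Sum>n<N. avoid_prob M y (Suc n) x)"
    unfolding hit_time_trunc_def by (rule sum.lessThan_Suc_shift)
  then show ?thesis
    by (simp add: hit_time_trunc_def nn_integral_sum)
qed

lemma hit_time_trunc_self [simp]: "hit_time_trunc M N y y = 0"
  by (simp add: hit_time_trunc_def)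

lemma hit_time_trunc_mono: "N \<le> N' \<Longrightarrow> hit_time_trunc M N x y \<le> hit_time_trunc M N' x y"
  unfolding hit_time_trunc_def by (intro sum_mono2) auto

lemma hit_time_trunc_step_le:
  "x \<noteq> y \<Longrightarrow> hit_time_trunc M N x y \<le> 1 + \<integral>\<^sup>+ z. hit_time_trunc M N z y \<partial>M x"
  using hit_time_trunc_mono[of N "Suc N" M x y] hit_time_trunc_Suc[of M N x y] by simp

lemma hit_time_trunc_le_hit_time: "hit_time_trunc M N x y \<le> hit_time M x y"
  unfolding hit_time_trunc_def hit_time_def by (rule sum_le_suminf) auto

lemma hit_time_eq_SUP: "hit_time M x y = (SUP N. hit_time_trunc M N x y)"
  unfolding hit_time_trunc_def hit_time_def by (rule suminf_eq_SUP)

lemma hit_time_trunc_finite: "hit_time_trunc M N x y \<noteq> \<top>"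
proof -
  have "hit_time_trunc M N x y \<le> (\<Sum>n<N. 1)"
    unfolding hit_time_trunc_def by (intro sum_mono avoid_prob_le_1)
  then show ?thesis
    by (auto simp: top_unique)
qed

text \<open>Splitting at the first visit to w: up to the first hit of w the chain may already have
  visited y, so in general only an inequality holds; it is an equality when the chain cannot
  reach y without passing through w.\<close>

lemma avoid_prob_split_le:
  "avoid_prob M y n x \<le> avoid_prob M w n x + (\<Sum>j\<le>n. first_hit_prob M w j x * avoid_prob M y (n - j) w)"
proof (induction n arbitrary: x)
  case (Suc n)
  show ?case
  proof (cases "x = y \<or> x = w")
    case False
    have "avoid_prob M y (Suc n) x = \<integral>\<^sup>+ z. avoid_prob M y n z \<partial>M x"
      using False by simp
    also have "\<dots> \<le> \<integral>\<^sup>+ z. avoid_prob M w n z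
        + (\<Sum>j\<le>n. first_hit_prob M w j z * avoid_prob M y (n - j) w) \<partial>M x"
      by (intro nn_integral_mono Suc.IH)
    also have "\<dots> = avoid_prob M w (Suc n) x
        + (\<Sum>j\<le>Suc n. first_hit_prob M w j x * avoid_prob M y (Suc n - j) w)"
      using False by (simp add: nn_integral_add nn_integral_sum nn_integral_multc
          sum.atMost_Suc_shift del: sum.atMost_Suc)
    finally show ?thesis .
  qed (auto simp: sum.atMost_Suc_shift simp del: sum.atMost_Suc)
qed simp

lemma avoid_prob_split:
  assumes "closed_until M w R" "y \<notin> R" "x \<in> R"
  shows "avoid_prob M y n x = avoid_prob M w n x + (\<Sum>j\<le>n. first_hit_prob M w j x * avoid_prob M y (n - j) w)"
  using assms(3)
proof (induction n arbitrary: x)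
  case 0
  then show ?case using assms(2) by auto
next
  case (Suc n)
  have "x \<noteq> y" using Suc.prems assms(2) by auto
  show ?case
  proof (cases "x = w")
    case False
    then have succ: "set_pmf (M x) \<subseteq> R"
      using assms(1) Suc.prems by (auto simp: closed_until_def)
    have "avoid_prob M y (Suc n) x = \<integral>\<^sup>+ z. avoid_prob M y n z \<partial>M x"
      using \<open>x \<noteq> y\<close> by simp
    also have "\<dots> = \<integral>\<^sup>+ z. avoid_prob M w n z
        + (\<Sum>j\<le>n. first_hit_prob M w j z * avoid_prob M y (n - j) w) \<partial>M x"
      using succ Suc.IH by (intro nn_integral_cong_AE) (auto simp: AE_measure_pmf_iff)
    also have "\<dots> = avoid_prob M w (Suc n) x
        + (\<Sum>j\<le>Suc n. first_hit_prob M w j x * avoid_prob M y (Suc n - j) w)"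
      using False by (simp add: nn_integral_add nn_integral_sum nn_integral_multc
          sum.atMost_Suc_shift del: sum.atMost_Suc)
    finally show ?thesis .
  qed (use \<open>x \<noteq> y\<close> in \<open>simp add: sum.atMost_Suc_shift del: sum.atMost_Suc\<close>)
qed

lemma hit_time_trunc_triangle:
  "hit_time_trunc M N x y \<le> hit_time_trunc M N x w + hit_time_trunc M N w y"
proof -
  have "hit_time_trunc M N x y
      \<le> hit_time_trunc M N x w + (\<Sum>n<N. \<Sum>j\<le>n. first_hit_prob M w j x * avoid_prob M y (n - j) w)"
    unfolding hit_time_trunc_def sum.distrib[symmetric] by (intro sum_mono avoid_prob_split_le)
  also have "\<dots> \<le> hit_time_trunc M N x w + (\<Sum>j<N. first_hit_prob M w j x) * hit_time_trunc M N w y"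
    unfolding hit_time_trunc_def by (intro add_left_mono sum_cauchy_product_le_ennreal)
  also have "\<dots> \<le> hit_time_trunc M N x w + 1 * hit_time_trunc M N w y"
  proof -
    have "(\<Sum>j<N. first_hit_prob M w j x) \<le> hit_prob M w x"
      unfolding hit_prob_def by (rule sum_le_suminf) auto
    then have "(\<Sum>j<N. first_hit_prob M w j x) \<le> 1"
      using hit_prob_le_1 by (rule order_trans)
    then show ?thesis
      by (intro add_left_mono mult_right_mono) auto
  qed
  finally show ?thesis by simp
qed

lemma hit_time_cut:
  assumes "closed_until M w R" "y \<notin> R" "x \<in> R"
  shows "hit_time M x y = hit_time M x w + hit_time M w y"
proof -
  have "hit_time M x y = hit_time M x w + hit_prob M w x * hit_time M w y"
    unfolding hit_time_def hit_prob_def avoid_prob_split[OF assms]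
    by (simp add: suminf_add[symmetric] suminf_cauchy_product_ennreal[of "\<lambda>j. first_hit_prob M w j x" "\<lambda>m. avoid_prob M y m w"])
  then show ?thesis
    using hit_prob_eq_1[of M x w] by (cases "hit_time M x w = \<top>") auto
qed

lemma avoid_prob_embed:
  assumes closed: "\<And>x z. x \<in> V \<Longrightarrow> x \<noteq> y \<Longrightarrow> z \<in> set_pmf (M x) \<Longrightarrow> z \<in> V"
    and commute: "\<And>x. x \<in> V \<Longrightarrow> x \<noteq> y \<Longrightarrow> M' (f x) = map_pmf f (M x)"
    and inj: "\<And>x. x \<in> V \<Longrightarrow> f x = f y \<longleftrightarrow> x = y"
    and "x \<in> V"
  shows "avoid_prob M' (f y) n (f x) = avoid_prob M y n x"
  using \<open>x \<in> V\<close>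
proof (induction n arbitrary: x)
  case (Suc n)
  show ?case
  proof (cases "x = y")
    case False
    then have "avoid_prob M' (f y) (Suc n) (f x) = \<integral>\<^sup>+ z. avoid_prob M' (f y) n (f z) \<partial>M x"
      using Suc.prems inj commute by simp
    also have "\<dots> = avoid_prob M y (Suc n) x"
      using False Suc closed by (auto intro!: nn_integral_cong_AE simp: AE_measure_pmf_iff)
    finally show ?thesis .
  qed simp
qed (use inj in auto)

lemma hit_time_embed:
  assumes "\<And>x z. x \<in> V \<Longrightarrow> x \<noteq> y \<Longrightarrow> z \<in> set_pmf (M x) \<Longrightarrow> z \<in> V"
    and "\<And>x. x \<in> V \<Longrightarrow> x \<noteq> y \<Longrightarrow> M' (f x) = map_pmf f (M x)"
    and "\<And>x. x \<in> V \<Longrightarrow> f x = f y \<longleftrightarrow> x = y"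
    and "x \<in> V"
  shows "hit_time M' (f x) (f y) = hit_time M x y"
    and "hit_time_trunc M' N (f x) (f y) = hit_time_trunc M N x y"
proof -
  have "avoid_prob M' (f y) n (f x) = avoid_prob M y n x" for n
    by (rule avoid_prob_embed[where V = V]) (fact assms)+
  then show "hit_time M' (f x) (f y) = hit_time M x y"
    and "hit_time_trunc M' N (f x) (f y) = hit_time_trunc M N x y"
    by (simp_all add: hit_time_def hit_time_trunc_def)
qed

section \<open>The chain\<close>

lemma paths_nonempty: "xs \<in> set_pmf (paths r p pc x n) \<Longrightarrow> xs \<noteq> []"
  by (induction n arbitrary: xs) auto

lemma paths_Suc_first:
  "paths r p pc x (Suc n) = K r p pc x \<bind> (\<lambda>z. map_pmf ((#) x) (paths r p pc z n))"
proof (induction n)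
  case 0
  then show ?case by (simp add: bind_return_pmf map_pmf_def)
next
  case (Suc n)
  have "paths r p pc x (Suc (Suc n))
      = K r p pc x \<bind> (\<lambda>z. map_pmf ((#) x) (paths r p pc z n)
          \<bind> (\<lambda>xs. map_pmf (\<lambda>z. xs @ [z]) (K r p pc (last xs))))"
    by (simp only: paths.simps(2)[of _ _ _ _ "Suc n"] Suc bind_assoc_pmf)
  also have "\<dots> = K r p pc x \<bind> (\<lambda>z. map_pmf ((#) x) (paths r p pc z (Suc n)))"
    unfolding bind_map_pmf paths.simps map_bind_pmf
    by (intro bind_pmf_cong refl) (auto simp: pmf.map_comp o_def dest: paths_nonempty)
  finally show ?case .
qed

lemma prob_paths_avoid:
  "ennreal (measure_pmf.prob (paths r p pc x n) {xs. y \<notin> set xs}) = avoid_prob (K r p pc) y n x"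
proof (induction n arbitrary: x)
  case 0
  then show ?case
    by (auto simp: measure_pmf.emeasure_eq_measure[symmetric] indicator_def)
next
  case (Suc n)
  have "ennreal (measure_pmf.prob (paths r p pc x (Suc n)) {xs. y \<notin> set xs})
      = emeasure (paths r p pc x (Suc n)) {xs. y \<notin> set xs}"
    by (simp add: measure_pmf.emeasure_eq_measure)
  also have "\<dots> = \<integral>\<^sup>+ z. emeasure (map_pmf ((#) x) (paths r p pc z n)) {xs. y \<notin> set xs} \<partial>K r p pc x"
    unfolding paths_Suc_first by simp
  also have "\<dots> = \<integral>\<^sup>+ z. (if x = y then 0 else avoid_prob (K r p pc) y n z) \<partial>K r p pc x"
    by (intro nn_integral_cong)
      (auto simp: Suc[symmetric] measure_pmf.emeasure_eq_measure vimage_def)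
  finally show ?case by simp
qed

lemma mht_eq_hit_time: "mht r p pc = hit_time (K r p pc)"
  by (simp add: fun_eq_iff mht_def hit_time_def prob_paths_avoid)

lemma up_Nil [simp]: "up r [] = Sharp"
  by (simp add: up_def)

lemma up_snoc: "up r (\<gamma> @ [a]) = (if a = r then up r \<gamma> else S (a + 1) \<gamma>)"
  by (simp add: up_def)

lemma up_neq_C [simp]: "up r \<gamma> \<noteq> C k \<delta>" "C k \<delta> \<noteq> up r \<gamma>"
  by (simp_all add: up_def Let_def)

lemma up_eq_S_decomp:
  assumes "up r u = S k \<delta>"
  shows "\<exists>a m. u = \<delta> @ a # replicate m r \<and> a \<noteq> r \<and> k = a + 1"
  using assms
proof (induction u rule: rev_induct)
  case (snoc b u)
  show ?case
  proof (cases "b = r")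
    case True
    with snoc obtain a m where "u = \<delta> @ a # replicate m r" "a \<noteq> r" "k = a + 1"
      by (auto simp: up_snoc)
    with True show ?thesis
      by (intro exI[of _ a] exI[of _ "Suc m"]) (simp add: replicate_append_same[symmetric])
  qed (use snoc.prems in \<open>auto simp: up_snoc\<close>)
qed simp

(* s_i^beta and c_i^beta sit at the node beta @ [i] of the tree of blocks *)
fun word :: "state \<Rightarrow> nat list" where
  "word Sharp = []"
| "word (S i \<beta>) = \<beta> @ [i]"
| "word (C i \<beta>) = \<beta> @ [i]"

definition valid :: "nat \<Rightarrow> state \<Rightarrow> bool" where
  "valid r x \<longleftrightarrow> set (word x) \<subseteq> {1..r}"

lemma valid_up: "set \<gamma> \<subseteq> {1..r} \<Longrightarrow> valid r (up r \<gamma>)"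
  by (cases "up r \<gamma>") (auto simp: valid_def dest!: up_eq_S_decomp)

definition embed_state :: "nat \<Rightarrow> nat list \<Rightarrow> state \<Rightarrow> state" where
  "embed_state r \<gamma> x = (case x of Sharp \<Rightarrow> up r \<gamma> | S i \<beta> \<Rightarrow> S i (\<gamma> @ \<beta>) | C i \<beta> \<Rightarrow> C i (\<gamma> @ \<beta>))"

lemma embed_state_simps [simp]:
  "embed_state r \<gamma> Sharp = up r \<gamma>"
  "embed_state r \<gamma> (S i \<beta>) = S i (\<gamma> @ \<beta>)"
  "embed_state r \<gamma> (C i \<beta>) = C i (\<gamma> @ \<beta>)"
  by (simp_all add: embed_state_def)

lemma up_append: "up r (\<gamma> @ \<beta>) = embed_state r \<gamma> (up r \<beta>)"
  by (induction \<beta> rule: rev_induct) (auto simp: embed_state_def up_snoc simp flip: append_assoc)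

lemma embed_state_eq_up_iff: "embed_state r \<gamma> x = up r \<gamma> \<longleftrightarrow> x = Sharp"
  by (cases x) (auto simp: embed_state_def dest!: up_eq_S_decomp[OF sym])

declare K.simps(2,3) [simp del]

lemma K_S:
  "1 \<le> j \<Longrightarrow> j \<le> r \<Longrightarrow>
    K r p pc (S j \<beta>) = map_pmf (\<lambda>b. if b then C j \<beta> else up r (\<beta> @ [j])) (bernoulli_pmf p)"
  unfolding up_snoc by (auto simp: K.simps)

lemma K_C:
  "1 \<le> j \<Longrightarrow> j \<le> r \<Longrightarrow>
    K r p pc (C j \<beta>) = map_pmf (\<lambda>b. if b then S 1 (\<beta> @ [j]) else up r (\<beta> @ [j])) (bernoulli_pmf pc)"
  unfolding up_snoc by (auto simp: K.simps)

lemma set_pmf_map_bernoulli: "set_pmf (map_pmf f (bernoulli_pmf q)) \<subseteq> {f True, f False}"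
  by (auto simp: UNIV_bool) (metis (full_types))

lemma valid_successor:
  assumes "1 \<le> r" "valid r x" "z \<in> set_pmf (K r p pc x)"
  shows "valid r z"
proof (cases x)
  case (S j \<beta>)
  with assms show ?thesis
    using set_pmf_map_bernoulli valid_up[of "\<beta> @ [j]" r]
    by (fastforce simp: valid_def K_S)
next
  case (C j \<beta>)
  with assms show ?thesis
    using set_pmf_map_bernoulli valid_up[of "\<beta> @ [j]" r]
    by (fastforce simp: valid_def K_C)
qed (use assms in \<open>auto simp: valid_def\<close>)

lemma K_embed_state:
  "valid r x \<Longrightarrow> x \<noteq> Sharp \<Longrightarrow> K r p pc (embed_state r \<gamma> x) = map_pmf (embed_state r \<gamma>) (K r p pc x)"
  by (cases x)
    (auto simp: valid_def embed_state_def K_S K_C pmf.map_comp o_def up_append[unfolded embed_state_def]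
      intro!: pmf.map_cong)

lemma hit_time_embed_state:
  assumes "1 \<le> r" "valid r x"
  shows "hit_time (K r p pc) (embed_state r \<gamma> x) (up r \<gamma>) = hit_time (K r p pc) x Sharp"
    and "hit_time_trunc (K r p pc) N (embed_state r \<gamma> x) (up r \<gamma>) = hit_time_trunc (K r p pc) N x Sharp"
  using hit_time_embed[where V = "Collect (valid r)" and y = Sharp and f = "embed_state r \<gamma>"
      and M = "K r p pc" and M' = "K r p pc" and x = x]
    assms valid_successor[OF assms(1)]
  by (simp_all add: K_embed_state embed_state_eq_up_iff)

definition word_region :: "nat \<Rightarrow> (nat list \<Rightarrow> bool) \<Rightarrow> state \<Rightarrow> state set" where
  "word_region r P w = insert w {x. x \<noteq> Sharp \<and> valid r x \<and> P (word x)}"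

lemma closed_until_word_region:
  assumes "1 \<le> r"
    and extend: "\<And>u. P u \<Longrightarrow> P (u @ [1])"
    and up: "\<And>u. u \<noteq> [] \<Longrightarrow> set u \<subseteq> {1..r} \<Longrightarrow> P u \<Longrightarrow> up r u \<in> word_region r P w"
  shows "closed_until (K r p pc) w (word_region r P w)"
  unfolding closed_until_def
proof (intro ballI subsetI)
  fix z z'
  assume z: "z \<in> word_region r P w - {w}" and z': "z' \<in> set_pmf (K r p pc z)"
  then obtain j \<beta> where j: "z = S j \<beta> \<or> z = C j \<beta>" "set (\<beta> @ [j]) \<subseteq> {1..r}" "P (\<beta> @ [j])"
    by (cases z) (auto simp: word_region_def valid_def)
  then have "z' \<in> {C j \<beta>, S 1 (\<beta> @ [j]), up r (\<beta> @ [j])}"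
    using z' set_pmf_map_bernoulli by (auto simp: K_S K_C)
  then show "z' \<in> word_region r P w"
    using j extend[of "\<beta> @ [j]"] up[of "\<beta> @ [j]"] \<open>1 \<le> r\<close>
    by (auto simp: word_region_def valid_def subset_iff)
qed

lemma closed_until_subtree:
  assumes "1 \<le> r"
  shows "closed_until (K r p pc) (up r \<beta>) (word_region r (prefix \<beta>) (up r \<beta>))"
proof (rule closed_until_word_region[OF assms])
  fix u
  assume u: "set u \<subseteq> {1..r}" "prefix \<beta> u"
  then obtain \<delta> where \<delta>: "u = \<beta> @ \<delta>"
    by (auto simp: prefix_def)
  have "valid r (up r \<delta>)"
    using u \<delta> by (intro valid_up) auto
  then show "up r u \<in> word_region r (prefix \<beta>) (up r \<beta>)"
    using u \<delta> by (cases "up r \<delta>") (auto simp: up_append embed_state_def word_region_def valid_def)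
qed auto

definition right_of :: "nat list \<Rightarrow> nat list \<Rightarrow> bool" where
  "right_of u v \<longleftrightarrow> (\<exists>c a b d e. a < b \<and> u = c @ b # d \<and> v = c @ a # e)"

lemma right_of_append: "right_of u v \<Longrightarrow> right_of (u @ w) v"
  unfolding right_of_def by fastforce

lemma not_right_of_append_self: "\<not> right_of (v @ w) v"
  by (auto simp: right_of_def)

lemma right_of_intro: "a < b \<Longrightarrow> right_of (c @ b # d) (c @ a # e)"
  unfolding right_of_def by blast

lemma right_of_up:
  assumes "right_of u v" "up r u = S k \<delta>"
  shows "right_of (\<delta> @ [k]) v"
proof -
  obtain a m where u: "u = \<delta> @ a # replicate m r" and k: "k = a + 1"
    using up_eq_S_decomp[OF assms(2)] by blast
  obtain c a' b d e where "a' < b" "u = c @ b # d" and v: "v = c @ a' # e"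
    using assms(1) by (auto simp: right_of_def)
  with u consider us where "\<delta> = c @ us" "us @ a # replicate m r = b # d"
    | us where "c = \<delta> @ us" "a # replicate m r = us @ b # d"
    by (auto simp: append_eq_append_conv2)
  then show ?thesis
  proof cases
    case (1 us)
    then show ?thesis
      using \<open>a' < b\<close> v k by (cases us) (auto intro: right_of_intro)
  next
    case (2 us)
    then show ?thesis
      using \<open>a' < b\<close> v k by (cases us) (auto intro: right_of_intro)
  qed
qed

(* a chain started right of v reaches v's subtree only through Sharp *)
lemma closed_until_right_of:
  assumes "1 \<le> r"
  shows "closed_until (K r p pc) Sharp (word_region r (\<lambda>u. right_of u v) Sharp)"
proof (rule closed_until_word_region[OF assms])
  fix u
  assume "set u \<subseteq> {1..r}" "right_of u v"
  then show "up r u \<in> word_region r (\<lambda>u. right_of u v) Sharp"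
    using valid_up[of u r] right_of_up[of u v r]
    by (cases "up r u") (auto simp: word_region_def valid_def)
qed (rule right_of_append)

lemma up_in_right_of_region:
  assumes "set v \<subseteq> {1..r}"
  shows "up r v \<in> word_region r (\<lambda>u. right_of u v) Sharp"
proof (cases "up r v")
  case (S k \<delta>)
  then obtain a m where "v = \<delta> @ a # replicate m r" "k = a + 1"
    using up_eq_S_decomp by blast
  then show ?thesis
    using S valid_up[OF assms] by (auto simp: word_region_def intro: right_of_intro)
qed (auto simp: word_region_def)

section \<open>Expected hitting times\<close>

locale guard_chain =
  fixes r :: nat and p pc :: real
  assumes r_pos: "1 \<le> r" and p_prob: "0 \<le> p" "p \<le> 1" and pc_prob: "0 \<le> pc" "pc \<le> 1"
begin

abbreviation m :: "state \<Rightarrow> state \<Rightarrow> ennreal" where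
  "m \<equiv> hit_time (K r p pc)"

abbreviation m_trunc :: "nat \<Rightarrow> state \<Rightarrow> state \<Rightarrow> ennreal" where
  "m_trunc \<equiv> hit_time_trunc (K r p pc)"

(* the mean time from S j gamma to up r (gamma @ [j]) when an excursion from S 1 (gamma @ [j])
   back to up r (gamma @ [j]) takes mean time c *)
definition exit_cost :: "ennreal \<Rightarrow> ennreal" where
  "exit_cost c = 1 + ennreal p * (1 + ennreal pc * c)"

abbreviation \<Delta> :: ennreal where
  "\<Delta> \<equiv> exit_cost (m (S 1 []) Sharp)"

lemma nn_integral_K_S:
  "1 \<le> j \<Longrightarrow> j \<le> r \<Longrightarrow>
    (\<integral>\<^sup>+ z. g z \<partial>K r p pc (S j \<beta>)) = ennreal p * g (C j \<beta>) + ennreal (1 - p) * g (up r (\<beta> @ [j]))"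
  using p_prob by (simp add: K_S mult.commute)

lemma nn_integral_K_C:
  "1 \<le> j \<Longrightarrow> j \<le> r \<Longrightarrow>
    (\<integral>\<^sup>+ z. g z \<partial>K r p pc (C j \<beta>)) = ennreal pc * g (S 1 (\<beta> @ [j])) + ennreal (1 - pc) * g (up r (\<beta> @ [j]))"
  using pc_prob by (simp add: K_C mult.commute)

lemma block_neq_up: "S j \<gamma> \<noteq> up r (\<gamma> @ [j])" "C j \<gamma> \<noteq> up r (\<gamma> @ [j])"
  by (auto dest!: up_eq_S_decomp[OF sym])

lemma valid_S1: "valid r (S 1 [])"
  using r_pos by (simp add: valid_def)

lemma hit_time_exit_block:
  assumes "1 \<le> j" "j \<le> r"
  shows "m (S j \<gamma>) (up r (\<gamma> @ [j])) = \<Delta>"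
proof -
  have "m (C j \<gamma>) (up r (\<gamma> @ [j])) = 1 + ennreal pc * m (S 1 []) Sharp"
    using hit_time_embed_state(1)[OF r_pos valid_S1, where \<gamma> = "\<gamma> @ [j]" and p = p and pc = pc] assms
    by (subst hit_time_step) (simp add: block_neq_up nn_integral_K_C)
  then show ?thesis
    using assms by (subst hit_time_step) (simp add: block_neq_up nn_integral_K_S exit_cost_def)
qed

lemma hit_time_trunc_exit_block:
  assumes "1 \<le> j" "j \<le> r"
  shows "m_trunc N (S j \<gamma>) (up r (\<gamma> @ [j])) \<le> exit_cost (m_trunc N (S 1 []) Sharp)"
proof -
  let ?w = "up r (\<gamma> @ [j])"
  have "m_trunc N (C j \<gamma>) ?w \<le> 1 + ennreal pc * m_trunc N (S 1 []) Sharp"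
    using hit_time_trunc_step_le[of "C j \<gamma>" ?w "K r p pc" N] assms
      hit_time_embed_state(2)[OF r_pos valid_S1, where \<gamma> = "\<gamma> @ [j]" and p = p and pc = pc]
    by (simp add: block_neq_up nn_integral_K_C)
  then have "1 + ennreal p * m_trunc N (C j \<gamma>) ?w \<le> exit_cost (m_trunc N (S 1 []) Sharp)"
    unfolding exit_cost_def by (intro add_left_mono mult_left_mono) auto
  moreover have "m_trunc N (S j \<gamma>) ?w \<le> 1 + ennreal p * m_trunc N (C j \<gamma>) ?w"
    using hit_time_trunc_step_le[of "S j \<gamma>" ?w "K r p pc" N] assms
    by (simp add: block_neq_up nn_integral_K_S)
  ultimately show ?thesis
    by (rule order_trans[rotated])
qed

lemma hit_time_S_block:
  assumes "1 \<le> j" "j \<le> r" "set \<gamma> \<subseteq> {1..r}" "\<not> prefix (\<gamma> @ [j]) (word y)"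
  shows "m (S j \<gamma>) y = \<Delta> + m (up r (\<gamma> @ [j])) y"
proof (cases "y = up r (\<gamma> @ [j])")
  case False
  let ?R = "word_region r (prefix (\<gamma> @ [j])) (up r (\<gamma> @ [j]))"
  have "y \<notin> ?R" "S j \<gamma> \<in> ?R"
    using False assms by (auto simp: word_region_def valid_def)
  then have "m (S j \<gamma>) y = m (S j \<gamma>) (up r (\<gamma> @ [j])) + m (up r (\<gamma> @ [j])) y"
    by (rule hit_time_cut[OF closed_until_subtree[OF r_pos]])
  then show ?thesis
    using hit_time_exit_block[OF assms(1,2)] by simp
qed (simp add: hit_time_exit_block[OF assms(1,2)])

lemma hit_time_S_chain:
  assumes "1 \<le> j" "j \<le> i" "i \<le> r" "set \<gamma> \<subseteq> {1..r}"
    and "\<And>l. j \<le> l \<Longrightarrow> l < i \<Longrightarrow> \<not> prefix (\<gamma> @ [l]) (word y)"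
  shows "m (S j \<gamma>) y = of_nat (i - j) * \<Delta> + m (S i \<gamma>) y"
  using assms
proof (induction "i - j" arbitrary: j)
  case (Suc d)
  then have "j < i"
    by simp
  with Suc.prems have "up r (\<gamma> @ [j]) = S (j + 1) \<gamma>"
    by (simp add: up_snoc)
  with Suc.prems \<open>j < i\<close> have "m (S j \<gamma>) y = \<Delta> + m (S (j + 1) \<gamma>) y"
    using hit_time_S_block[of j \<gamma> y] by simp
  also have "m (S (j + 1) \<gamma>) y = of_nat (i - (j + 1)) * \<Delta> + m (S i \<gamma>) y"
    using Suc.prems Suc.hyps(2) \<open>j < i\<close> by (intro Suc.hyps(1)) auto
  also have "\<Delta> + (of_nat (i - (j + 1)) * \<Delta> + m (S i \<gamma>) y) = of_nat (i - j) * \<Delta> + m (S i \<gamma>) y"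
    using \<open>j < i\<close> by (simp add: Suc_diff_Suc[symmetric] distrib_right add.assoc)
  finally show ?case .
qed simp

lemma hit_time_S_within:
  assumes "1 \<le> j" "j \<le> i" "i \<le> r" "set \<gamma> \<subseteq> {1..r}"
  shows "m (S j \<gamma>) (S i \<gamma>) = of_nat (i - j) * \<Delta>"
  using hit_time_S_chain[OF assms, of "S i \<gamma>"] by simp

lemma hit_time_S_Sharp:
  assumes "1 \<le> j" "j \<le> r" "set \<gamma> \<subseteq> {1..r}"
  shows "m (S j \<gamma>) Sharp = of_nat (r - j + 1) * \<Delta> + m (up r \<gamma>) Sharp"
proof -
  have "m (S j \<gamma>) Sharp = of_nat (r - j) * \<Delta> + m (S r \<gamma>) Sharp"
    using hit_time_S_chain[OF assms(1,2) order_refl assms(3)] by simp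
  also have "m (S r \<gamma>) Sharp = \<Delta> + m (up r \<gamma>) Sharp"
    using hit_time_S_block[of r \<gamma> Sharp] r_pos assms(3) by (simp add: up_snoc)
  finally show ?thesis
    by (simp add: distrib_right add.assoc)
qed

lemma hit_time_up_Sharp:
  "set \<gamma> \<subseteq> {1..r} \<Longrightarrow> m (up r \<gamma>) Sharp = (\<Sum>s<length \<gamma>. of_nat (r - \<gamma> ! s) * \<Delta>)"
proof (induction \<gamma> rule: rev_induct)
  case (snoc a \<gamma>)
  show ?case
  proof (cases "a = r")
    case False
    with snoc.prems have "a < r"
      by simp
    then have "Suc (r - Suc a) = r - a"
      by simp
    have "m (up r (\<gamma> @ [a])) Sharp = m (S (a + 1) \<gamma>) Sharp"
      using False by (simp add: up_snoc)
    also have "\<dots> = of_nat (r - a) * \<Delta> + m (up r \<gamma>) Sharp"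
      using hit_time_S_Sharp[of "a + 1" \<gamma>] snoc.prems \<open>a < r\<close>
      by (simp add: \<open>Suc (r - Suc a) = r - a\<close>)
    finally show ?thesis
      using snoc by (simp add: nth_append add.commute)
  qed (use snoc in \<open>simp add: up_snoc nth_append\<close>)
qed simp

lemma hit_time_trunc_S_Sharp_le:
  assumes "1 \<le> j" "j \<le> r"
  shows "m_trunc N (S j []) Sharp \<le> of_nat (r - j + 1) * exit_cost (m_trunc N (S 1 []) Sharp)"
  using assms
proof (induction "r - j" arbitrary: j)
  case 0
  then have "j = r"
    by simp
  then show ?case
    using hit_time_trunc_exit_block[of r N "[]"] r_pos by (simp add: up_def)
next
  case (Suc d)
  let ?c = "exit_cost (m_trunc N (S 1 []) Sharp)"
  have "up r [j] = S (j + 1) []"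
    using Suc by (simp add: up_def)
  then have "m_trunc N (S j []) Sharp \<le> ?c + m_trunc N (S (j + 1) []) Sharp"
    using hit_time_trunc_triangle[of "K r p pc" N "S j []" Sharp "up r [j]"]
      hit_time_trunc_exit_block[of j N "[]"] Suc.prems
    by (auto intro: order_trans add_right_mono)
  also have "\<dots> \<le> ?c + of_nat (r - (j + 1) + 1) * ?c"
    using Suc by (intro add_left_mono Suc.hyps) auto
  also have "\<dots> = of_nat (r - j + 1) * ?c"
  proof -
    have "r - j + 1 = 1 + (r - (j + 1) + 1)"
      using Suc.hyps(2) by simp
    then show ?thesis
      by (simp only: of_nat_add distrib_right) simp
  qed
  finally show ?case .
qed

lemma hit_time_S1_Sharp_finite:
  assumes "p * pc * real r < 1"
  shows "m (S 1 []) Sharp \<noteq> \<top>"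
proof -
  let ?bound = "ennreal (real r * (1 + p)) / ennreal (1 - p * pc * real r)"
  have "m_trunc N (S 1 []) Sharp \<le> ?bound" for N
  proof (rule ennreal_le_affine_fixpoint)
    have "of_nat r * exit_cost c = ennreal (real r * (1 + p)) + ennreal (p * pc * real r) * c" for c
      using p_prob pc_prob
      by (simp add: exit_cost_def ennreal_of_nat_eq_real_of_nat ennreal_mult ennreal_plus
          distrib_left distrib_right mult_ac add_ac)
    then show "m_trunc N (S 1 []) Sharp
        \<le> ennreal (real r * (1 + p)) + ennreal (p * pc * real r) * m_trunc N (S 1 []) Sharp"
      using hit_time_trunc_S_Sharp_le[of 1 N] r_pos by simp
  next
    show "m_trunc N (S 1 []) Sharp \<noteq> \<top>"
      by (rule hit_time_trunc_finite)
  qed (use assms p_prob pc_prob in auto)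
  then have "m (S 1 []) Sharp \<le> ?bound"
    unfolding hit_time_eq_SUP by (rule SUP_least)
  moreover have "?bound \<noteq> \<top>"
    using assms p_prob by (subst divide_ennreal) auto
  ultimately show ?thesis
    by (auto simp: top_unique)
qed

end

locale guard_target = guard_chain +
  fixes \<alpha> :: "nat list" and i :: nat
  assumes subcritical: "p * pc * real r < 1"
    and letters: "set \<alpha> \<subseteq> {1..r}" and i_range: "1 \<le> i" "i \<le> r"
begin

abbreviation T :: state where
  "T \<equiv> S i \<alpha>"

abbreviation Y :: "nat \<Rightarrow> ennreal" where
  "Y k \<equiv> m (S 1 (take k \<alpha>)) T"

abbreviation Y_trunc :: "nat \<Rightarrow> nat \<Rightarrow> ennreal" where
  "Y_trunc N k \<equiv> m_trunc N (S 1 (take k \<alpha>)) T"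

(* the mean time from S 1 (take k alpha) until the chain enters S 1 (take (Suc k) alpha),
   which happens with probability p * pc, or returns to Sharp *)
definition level_cost :: "nat \<Rightarrow> ennreal" where
  "level_cost k = 1 + ennreal p + of_nat (\<alpha> ! k - 1) * \<Delta>
     + ennreal (1 - p * pc) * (\<Sum>s = 1..Suc k. of_nat (r - \<alpha> ! (s - 1)) * \<Delta>)"

lemma split_at_letter:
  assumes "k < length \<alpha>"
  shows "\<alpha> = take k \<alpha> @ \<alpha> ! k # drop (Suc k) \<alpha>" "take (Suc k) \<alpha> = take k \<alpha> @ [\<alpha> ! k]"
    "1 \<le> \<alpha> ! k" "\<alpha> ! k \<le> r" "set (take k \<alpha>) \<subseteq> {1..r}"
proof -
  show "\<alpha> = take k \<alpha> @ \<alpha> ! k # drop (Suc k) \<alpha>"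
    using assms by (rule id_take_nth_drop)
  show "take (Suc k) \<alpha> = take k \<alpha> @ [\<alpha> ! k]"
    using assms by (rule take_Suc_conv_app_nth)
  have "\<alpha> ! k \<in> {1..r}"
    using nth_mem[OF assms] letters by (rule subsetD[rotated])
  then show "1 \<le> \<alpha> ! k" "\<alpha> ! k \<le> r"
    by simp_all
  show "set (take k \<alpha>) \<subseteq> {1..r}"
    using set_take_subset letters by (rule order_trans)
qed

lemma hit_time_Sharp_T: "m Sharp T = 1 + Y 0"
  by (subst hit_time_step) simp

lemma hit_time_trunc_Sharp_T_le: "m_trunc N Sharp T \<le> 1 + Y_trunc N 0"
  using hit_time_trunc_step_le[of Sharp T "K r p pc" N] by simp

lemma Y_last: "Y (length \<alpha>) = of_nat (i - 1) * \<Delta>"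
  using hit_time_S_within[of 1 i \<alpha>] i_range letters by simp

lemma hit_time_up_T:
  assumes "prefix v \<alpha>"
  shows "m (up r v) T = m (up r v) Sharp + m Sharp T"
proof -
  have "set v \<subseteq> {1..r}"
    using assms letters by (auto dest: set_mono_prefix)
  moreover obtain w where "\<alpha> = v @ w"
    using assms by (auto simp: prefix_def)
  then have "T \<notin> word_region r (\<lambda>u. right_of u v) Sharp"
    using not_right_of_append_self[of v "w @ [i]"] by (auto simp: word_region_def)
  ultimately show ?thesis
    using hit_time_cut[OF closed_until_right_of[OF r_pos]] up_in_right_of_region by blast
qed

lemma hit_time_up_take_Sharp:
  assumes "k < length \<alpha>"
  shows "m (up r (take (Suc k) \<alpha>)) Sharp = (\<Sum>s = 1..Suc k. of_nat (r - \<alpha> ! (s - 1)) * \<Delta>)"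
proof -
  have "set (take (Suc k) \<alpha>) \<subseteq> {1..r}"
    using letters by (meson in_set_takeD subset_code(1))
  moreover have "length (take (Suc k) \<alpha>) = Suc k"
    using assms by simp
  ultimately show ?thesis
    by (simp add: hit_time_up_Sharp sum.atLeast1_atMost_eq del: length_take)
qed

lemma level_identity:
  fixes D Y' N E :: ennreal
  shows "D + (1 + ennreal p * (1 + ennreal pc * Y' + ennreal (1 - pc) * (N + E)) + ennreal (1 - p) * (N + E))
    = (1 + ennreal p + D + ennreal (1 - p * pc) * N) + ennreal (p * pc) * Y' + ennreal (1 - p * pc) * E"
proof -
  have "ennreal p * ennreal (1 - pc) + ennreal (1 - p) = ennreal (p * (1 - pc) + (1 - p))"
    using p_prob pc_prob by (simp add: ennreal_mult ennreal_plus)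
  also have "p * (1 - pc) + (1 - p) = 1 - p * pc"
    by (simp add: algebra_simps)
  finally have "ennreal p * ennreal (1 - pc) + ennreal (1 - p) = ennreal (1 - p * pc)" .
  then have "ennreal p * (ennreal (1 - pc) * X) + ennreal (1 - p) * X = ennreal (1 - p * pc) * X" for X
    by (metis distrib_right mult.assoc)
  then show ?thesis
    using p_prob pc_prob by (simp add: distrib_left ennreal_mult add_ac mult.assoc)
qed

lemma not_prefix_word_T:
  assumes "k < length \<alpha>" "l \<noteq> \<alpha> ! k"
  shows "\<not> prefix (take k \<alpha> @ [l]) (word T)"
proof -
  have "word T = take k \<alpha> @ \<alpha> ! k # (drop (Suc k) \<alpha> @ [i])"
    using split_at_letter(1)[OF assms(1)] by (metis append.assoc append_Cons word.simps(2))
  then show ?thesis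
    using assms(2) by (simp del: word.simps)
qed

lemma Y_step:
  assumes "k < length \<alpha>"
  shows "Y k = level_cost k + ennreal (p * pc) * Y (Suc k) + ennreal (1 - p * pc) * m Sharp T"
proof -
  let ?a = "\<alpha> ! k" and ?\<beta> = "take k \<alpha>" and ?w = "up r (take (Suc k) \<alpha>)"
  let ?N = "\<Sum>s = 1..Suc k. of_nat (r - \<alpha> ! (s - 1)) * \<Delta>"
  note a = split_at_letter(2-5)[OF assms]
  have T_neq: "S ?a ?\<beta> \<noteq> T" "C ?a ?\<beta> \<noteq> T"
    using assms by (auto dest: arg_cong[of _ _ length])
  have "Y k = of_nat (?a - 1) * \<Delta> + m (S ?a ?\<beta>) T"
    using a not_prefix_word_T[OF assms] by (intro hit_time_S_chain) auto
  moreover have "m ?w T = ?N + m Sharp T"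
    using hit_time_up_T[OF take_is_prefix] hit_time_up_take_Sharp[OF assms] by simp
  moreover have "m (C ?a ?\<beta>) T = 1 + ennreal pc * Y (Suc k) + ennreal (1 - pc) * m ?w T"
    using T_neq a by (subst hit_time_step) (simp add: nn_integral_K_C)
  moreover have "m (S ?a ?\<beta>) T = 1 + ennreal p * m (C ?a ?\<beta>) T + ennreal (1 - p) * m ?w T"
    using T_neq a by (subst hit_time_step) (simp add: nn_integral_K_S)
  ultimately have "Y k = of_nat (?a - 1) * \<Delta> + (1 + ennreal p * (1 + ennreal pc * Y (Suc k)
      + ennreal (1 - pc) * (?N + m Sharp T)) + ennreal (1 - p) * (?N + m Sharp T))"
    by (simp add: add.assoc)
  then show ?thesis
    unfolding level_identity level_cost_def .
qed

lemma Y_trunc_step_le: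
  assumes "k < length \<alpha>"
  shows "Y_trunc N k \<le> level_cost k + ennreal (p * pc) * Y_trunc N (Suc k) + ennreal (1 - p * pc) * m_trunc N Sharp T"
proof -
  let ?a = "\<alpha> ! k" and ?\<beta> = "take k \<alpha>" and ?w = "up r (take (Suc k) \<alpha>)"
  let ?N = "\<Sum>s = 1..Suc k. of_nat (r - \<alpha> ! (s - 1)) * \<Delta>" and ?E = "m_trunc N Sharp T"
  note a = split_at_letter(2-5)[OF assms]
  have T_neq: "S ?a ?\<beta> \<noteq> T" "C ?a ?\<beta> \<noteq> T"
    using assms by (auto dest: arg_cong[of _ _ length])
  have "m_trunc N ?w T \<le> m_trunc N ?w Sharp + ?E"
    by (rule hit_time_trunc_triangle)
  also have "\<dots> \<le> ?N + ?E"
    using hit_time_trunc_le_hit_time[of "K r p pc" N ?w Sharp] hit_time_up_take_Sharp[OF assms]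
    by (simp add: add_right_mono)
  finally have w: "m_trunc N ?w T \<le> ?N + ?E" .
  have "m_trunc N (C ?a ?\<beta>) T \<le> 1 + (ennreal pc * Y_trunc N (Suc k) + ennreal (1 - pc) * m_trunc N ?w T)"
    using hit_time_trunc_step_le[of "C ?a ?\<beta>" T "K r p pc" N] T_neq a by (simp add: nn_integral_K_C)
  also have "\<dots> \<le> 1 + ennreal pc * Y_trunc N (Suc k) + ennreal (1 - pc) * (?N + ?E)"
    using w by (simp add: add.assoc add_left_mono mult_left_mono)
  finally have C: "m_trunc N (C ?a ?\<beta>) T \<le> 1 + ennreal pc * Y_trunc N (Suc k) + ennreal (1 - pc) * (?N + ?E)" .
  have "m_trunc N (S ?a ?\<beta>) T \<le> 1 + (ennreal p * m_trunc N (C ?a ?\<beta>) T + ennreal (1 - p) * m_trunc N ?w T)"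
    using hit_time_trunc_step_le[of "S ?a ?\<beta>" T "K r p pc" N] T_neq a by (simp add: nn_integral_K_S)
  also have "\<dots> \<le> 1 + ennreal p * (1 + ennreal pc * Y_trunc N (Suc k) + ennreal (1 - pc) * (?N + ?E))
      + ennreal (1 - p) * (?N + ?E)"
    using C w by (simp add: add.assoc add_left_mono add_mono mult_left_mono)
  finally have S: "m_trunc N (S ?a ?\<beta>) T \<le> 1 + ennreal p * (1 + ennreal pc * Y_trunc N (Suc k)
      + ennreal (1 - pc) * (?N + ?E)) + ennreal (1 - p) * (?N + ?E)" .
  have "Y_trunc N k \<le> m_trunc N (S 1 ?\<beta>) (S ?a ?\<beta>) + m_trunc N (S ?a ?\<beta>) T"
    by (rule hit_time_trunc_triangle)
  also have "m_trunc N (S 1 ?\<beta>) (S ?a ?\<beta>) \<le> of_nat (?a - 1) * \<Delta>"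
    using hit_time_trunc_le_hit_time[of "K r p pc" N "S 1 ?\<beta>" "S ?a ?\<beta>"] a
      hit_time_S_within[of 1 ?a ?\<beta>] by simp
  finally have "Y_trunc N k \<le> of_nat (?a - 1) * \<Delta> + (1 + ennreal p * (1 + ennreal pc * Y_trunc N (Suc k)
      + ennreal (1 - pc) * (?N + ?E)) + ennreal (1 - p) * (?N + ?E))"
    using S by (simp add: add_left_mono order_trans)
  then show ?thesis
    unfolding level_identity level_cost_def .
qed

definition hitting_numerator :: ennreal where
  "hitting_numerator = 1 + (\<Sum>k<length \<alpha>. ennreal (p * pc) ^ k * level_cost k)
     + ennreal (p * pc) ^ length \<alpha> * (of_nat (i - 1) * \<Delta>)"

lemma nu_prob: "0 \<le> p * pc" "p * pc \<le> 1"
  using p_prob pc_prob by (auto intro: mult_le_one)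

lemma hitting_numerator_split:
  "1 + (\<Sum>k<length \<alpha>. ennreal (p * pc) ^ k * (level_cost k + ennreal (1 - p * pc) * X))
     + ennreal (p * pc) ^ length \<alpha> * (of_nat (i - 1) * \<Delta>)
   = hitting_numerator + ennreal (1 - (p * pc) ^ length \<alpha>) * X"
proof -
  let ?\<nu> = "ennreal (p * pc)"
  have geometric: "(\<Sum>k<n. ?\<nu> ^ k) * ennreal (1 - p * pc) = ennreal (1 - (p * pc) ^ n)" for n
  proof -
    have "(\<Sum>k<n. ?\<nu> ^ k) = (\<Sum>k<n. ennreal ((p * pc) ^ k))"
      using nu_prob by (simp add: ennreal_power)
    also have "\<dots> = ennreal (\<Sum>k<n. (p * pc) ^ k)"
      using nu_prob by (intro sum_ennreal) simp
    finally have "(\<Sum>k<n. ?\<nu> ^ k) * ennreal (1 - p * pc) = ennreal ((1 - p * pc) * (\<Sum>k<n. (p * pc) ^ k))"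
      using nu_prob by (simp add: ennreal_mult sum_nonneg mult.commute)
    then show ?thesis
      by (simp only: one_diff_power_eq)
  qed
  have "(\<Sum>k<length \<alpha>. ?\<nu> ^ k * (level_cost k + ennreal (1 - p * pc) * X))
      = (\<Sum>k<length \<alpha>. ?\<nu> ^ k * level_cost k) + (\<Sum>k<length \<alpha>. ?\<nu> ^ k) * ennreal (1 - p * pc) * X"
    by (simp add: distrib_left sum.distrib sum_distrib_right mult.assoc)
  then show ?thesis
    unfolding hitting_numerator_def geometric by (simp add: add_ac)
qed

lemma hit_time_Sharp_T_fixpoint:
  "m Sharp T = hitting_numerator + ennreal (1 - (p * pc) ^ length \<alpha>) * m Sharp T"
proof -
  let ?b = "\<lambda>k. level_cost k + ennreal (1 - p * pc) * m Sharp T"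
  have Y0: "Y 0 = (\<Sum>k<length \<alpha>. ennreal (p * pc) ^ k * ?b k) + ennreal (p * pc) ^ length \<alpha> * Y (length \<alpha>)"
  proof (rule telescope_eq)
    fix k
    assume "k < length \<alpha>"
    then show "Y k = ?b k + ennreal (p * pc) * Y (Suc k)"
      using Y_step[of k] by (simp add: add_ac)
  qed
  have "m Sharp T = 1 + Y 0"
    by (rule hit_time_Sharp_T)
  also have "\<dots> = 1 + (\<Sum>k<length \<alpha>. ennreal (p * pc) ^ k * ?b k)
      + ennreal (p * pc) ^ length \<alpha> * (of_nat (i - 1) * \<Delta>)"
    by (subst Y0) (simp only: Y_last add.assoc)
  also have "\<dots> = hitting_numerator + ennreal (1 - (p * pc) ^ length \<alpha>) * m Sharp T"
    by (rule hitting_numerator_split)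
  finally show ?thesis .
qed

lemma hit_time_trunc_Sharp_T_fixpoint_le:
  "m_trunc N Sharp T \<le> hitting_numerator + ennreal (1 - (p * pc) ^ length \<alpha>) * m_trunc N Sharp T"
proof -
  let ?b = "\<lambda>k. level_cost k + ennreal (1 - p * pc) * m_trunc N Sharp T"
  have "Y_trunc N 0 \<le> (\<Sum>k<length \<alpha>. ennreal (p * pc) ^ k * ?b k)
      + ennreal (p * pc) ^ length \<alpha> * Y_trunc N (length \<alpha>)"
  proof (rule telescope_le)
    fix k
    assume "k < length \<alpha>"
    then show "Y_trunc N k \<le> ?b k + ennreal (p * pc) * Y_trunc N (Suc k)"
      using Y_trunc_step_le[of k N] by (simp add: add_ac)
  qed simp
  also have "\<dots> \<le> (\<Sum>k<length \<alpha>. ennreal (p * pc) ^ k * ?b k)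
      + ennreal (p * pc) ^ length \<alpha> * (of_nat (i - 1) * \<Delta>)"
    using hit_time_trunc_le_hit_time[of "K r p pc" N "S 1 \<alpha>" T] Y_last
    by (intro add_left_mono mult_left_mono) auto
  finally have Y0: "Y_trunc N 0 \<le> (\<Sum>k<length \<alpha>. ennreal (p * pc) ^ k * ?b k)
      + ennreal (p * pc) ^ length \<alpha> * (of_nat (i - 1) * \<Delta>)" .
  have "m_trunc N Sharp T \<le> 1 + Y_trunc N 0"
    by (rule hit_time_trunc_Sharp_T_le)
  also have "\<dots> \<le> 1 + ((\<Sum>k<length \<alpha>. ennreal (p * pc) ^ k * ?b k)
      + ennreal (p * pc) ^ length \<alpha> * (of_nat (i - 1) * \<Delta>))"
    using Y0 by (rule add_left_mono)
  also have "\<dots> = hitting_numerator + ennreal (1 - (p * pc) ^ length \<alpha>) * m_trunc N Sharp T"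
    using hitting_numerator_split[of "m_trunc N Sharp T"] by (simp only: add.assoc)
  finally show ?thesis .
qed

lemma hitting_numerator_finite: "hitting_numerator \<noteq> \<top>"
proof -
  have "\<Delta> \<noteq> \<top>"
    using hit_time_S1_Sharp_finite[OF subcritical]
    by (simp add: exit_cost_def ennreal_mult_eq_top_iff)
  then show ?thesis
    by (simp add: hitting_numerator_def level_cost_def ennreal_sum_eq_top ennreal_mult_eq_top_iff
        power_eq_top_ennreal)
qed

lemma hit_time_Sharp_T_value:
  assumes "(p * pc) ^ length \<alpha> \<noteq> 0"
  shows "m Sharp T = hitting_numerator / ennreal ((p * pc) ^ length \<alpha>)"
proof -
  let ?q = "1 - (p * pc) ^ length \<alpha>"
  have q: "0 \<le> ?q" "?q < 1"
    using assms nu_prob by (auto simp: power_le_one less_le)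
  have "m_trunc N Sharp T \<le> hitting_numerator / ennreal (1 - ?q)" for N
    using hit_time_trunc_Sharp_T_fixpoint_le hit_time_trunc_finite q by (rule ennreal_le_affine_fixpoint)
  then have "m Sharp T \<le> hitting_numerator / ennreal ((p * pc) ^ length \<alpha>)"
    unfolding hit_time_eq_SUP by (intro SUP_least) simp
  moreover have "0 < (p * pc) ^ length \<alpha>"
    using assms nu_prob by (simp add: less_le)
  then have "ennreal ((p * pc) ^ length \<alpha>) \<noteq> 0"
    by (simp only: ennreal_eq_0_iff not_le)
  then have "hitting_numerator / ennreal ((p * pc) ^ length \<alpha>) \<noteq> \<top>"
    using hitting_numerator_finite unfolding ennreal_divide_eq_top_iff by blast
  ultimately have "m Sharp T \<noteq> \<top>"
    by (auto simp: top_unique)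
  from ennreal_eq_affine_fixpoint[OF hit_time_Sharp_T_fixpoint this q] show ?thesis
    by simp
qed

lemma hit_time_Sharp_T_infinite:
  assumes "(p * pc) ^ length \<alpha> = 0"
  shows "m Sharp T = \<top>"
proof -
  have "m Sharp T + 0 = m Sharp T + hitting_numerator"
    using hit_time_Sharp_T_fixpoint assms by (simp add: add.commute)
  moreover have "hitting_numerator \<noteq> 0"
    by (simp add: hitting_numerator_def)
  ultimately show ?thesis
    by (simp add: ennreal_add_left_cancel)
qed

lemma hit_time_Sharp_T_formula:
  "m Sharp T = inverse (ennreal (p * pc) ^ length \<alpha>) + of_nat (i - 1) * \<Delta>
     + (\<Sum>k = 1..length \<alpha>. level_cost (k - 1) / ennreal (p * pc) ^ (length \<alpha> + 1 - k))"
proof -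
  let ?\<nu> = "ennreal (p * pc)" and ?t = "length \<alpha>"
  have \<nu>_power: "?\<nu> ^ ?t = ennreal ((p * pc) ^ ?t)"
    using nu_prob by (simp add: ennreal_power)
  show ?thesis
  proof (cases "(p * pc) ^ ?t = 0")
    case True
    have "inverse (?\<nu> ^ ?t) = \<top>"
      unfolding \<nu>_power True by simp
    then show ?thesis
      using hit_time_Sharp_T_infinite[OF True] by (simp only: add_top_left_ennreal)
  next
    case False
    then have "?\<nu> ^ ?t \<noteq> 0"
      unfolding \<nu>_power using nu_prob by simp
    have "m Sharp T = hitting_numerator / ?\<nu> ^ ?t"
      unfolding \<nu>_power using False by (rule hit_time_Sharp_T_value)
    also have "\<dots> = inverse (?\<nu> ^ ?t) + of_nat (i - 1) * \<Delta>
        + (\<Sum>k = 1..?t. level_cost (k - 1) / ?\<nu> ^ (?t + 1 - k))"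
      unfolding hitting_numerator_def using \<open>?\<nu> ^ ?t \<noteq> 0\<close> by (rule divide_power_split_ennreal) simp
    finally show ?thesis .
  qed
qed

end

theorem theorem3p5:
  fixes r :: nat and p pc :: real and \<alpha> :: "nat list" and i :: nat
  assumes "r \<ge> 1" and "0 \<le> p" "p \<le> 1" and "0 \<le> pc" "pc \<le> 1"
    and "p * pc * real r < 1"
    and "\<forall>a \<in> set \<alpha>. 1 \<le> a \<and> a \<le> r"
    and "1 \<le> i" "i \<le> r"
  shows "let \<nu> = ennreal (p * pc); t = length \<alpha>;
             Cc = mht r p pc (S 1 []) Sharp;
             \<Delta> = 1 + ennreal p * (1 + ennreal pc * Cc)
         in mht r p pc Sharp (S i \<alpha>) =
              inverse (\<nu> ^ t) + of_nat (i - 1) * \<Delta>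
              + (\<Sum>k = 1..t. (1 + ennreal p + of_nat (\<alpha> ! (k - 1) - 1) * \<Delta>
                    + ennreal (1 - p * pc) * (\<Sum>s = 1..k. of_nat (r - \<alpha> ! (s - 1)) * \<Delta>))
                   / \<nu> ^ (t + 1 - k))"
proof -
  interpret guard_target r p pc \<alpha> i
    using assms by unfold_locales auto
  have "(\<Sum>k = 1..length \<alpha>. level_cost (k - 1) / ennreal (p * pc) ^ (length \<alpha> + 1 - k))
      = (\<Sum>k = 1..length \<alpha>. (1 + ennreal p + of_nat (\<alpha> ! (k - 1) - 1) * \<Delta>
          + ennreal (1 - p * pc) * (\<Sum>s = 1..k. of_nat (r - \<alpha> ! (s - 1)) * \<Delta>))
          / ennreal (p * pc) ^ (length \<alpha> + 1 - k))"
    by (intro sum.cong) (auto simp: level_cost_def)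
  with hit_time_Sharp_T_formula show ?thesis
    by (simp add: Let_def mht_eq_hit_time exit_cost_def)
qed

end
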